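(* Suppose there exist $c,d\in\mathbb{N}^+$ and $\gamma>0$ such that, as a function of $n$, $$\sup\left\{\frac{|f|_{\mathcal{C}}}{|f|_{\mathcal{U}^c}}: f\in H^n,\ |f|_{\mathcal{U}^c}\le n^d\right\}\notin O(n^{1+\gamma}).$$ Then there exist a language $L\in\mathbf{P}$ and $\tau>0$ such that no sequence of Boolean circuits $(C_n)_n$ with $C_n$ computing $L|_n$ for every $n$ has sizes $|C_n|\in O(n^{1+\tau})$.
   Context: Let $\mathcal{B}=\{0,1\}$, let $\mathcal{B}^*$ be the set of finite binary strings and $|h|$ the length of $h\in\mathcal{B}^*$. For $n\in\mathbb{N}^+$, $H^n$ is the set of all functions $\mathcal{B}^n\to\mathcal{B}$. An interpreter is a Turing machine computing a partial function $\varphi:\mathcal{B}^*\times\mathcal{B}^*\to\mathcal{B}\cup\{\bot\}$, where $\bot$ denotes non-halting (or invalid) output. For $f\in H^n$, $|f|_\varphi=\min\{|h|:\varphi(h,x)=f(x)\ \forall x\in\mathcal{B}^n\}$ ($+\infty$ if no such $h$). Turing machines have alphabet $\{0,1,b\}$ ($b$ blank), a finite state set containing an initial state and two final states accept/reject; the output is $1$ if halting in accept, $0$ if halting in reject, $\bot$ otherwise; multi-tape machines have read-only input tapes and read/write work tapes, and the transition function is a finite list of rules. $E(T)$ is a fixed prefix-free binary encoding of a machine $T$ listing its rules (of length at least 2 for every machine). For $c\in\mathbb{N}^+$, $\mathcal{U}^c$ is a time-bounded universal interpreter (a 2-input-tape, 3-work-tape machine): on $(p,x)$ with $n=|x|$,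 it checks within $n^c$ steps whether $p=E(T)u$ for a two-input-tape machine $T$ and $u\in\mathcal{B}^*$ (outputting $\bot$ if not, or if the check does not finish), then simulates $T$ on $(u,x)$ with an efficient universal simulation (Hennie–Stearns, overhead $O(t\log t)$ for $t$ simulated steps), devoting at most $n^c$ of its own steps to the simulation; it outputs $T$'s output if $T$ halts within this budget and $0$ otherwise. For fixed $p$ it runs in at most $\beta n^c$ steps for a constant $\beta$. A Boolean circuit on $n$ inputs is a DAG with a unique sink (output) whose sources are labelled by input indices in $\{1,\dots,n\}$ and whose other vertices (gates) are labelled AND, OR (two incoming edges) or NOT (one incoming edge); its size $|C|$ is its number of vertices. The circuit interpreter $\mathcal{C}$ reads a program $h=0^{\lceil\log_2 n\rceil}1\,[\text{binary expansion of } n]\,0^{|C|}1\,[\text{description of vertex } i]_{i=1}^{|C|}$, each vertex being described by its label and its parents/input index using $\max\{2\lceil\log_2|C|\rceil,\lceil\log_2 n\rceil\}$ bits beyond the label bits, so a circuit $C$ on $n$ inputs has encoding length $L(|C|,n)=2\lceil\log_2 n\rceil+2+|C|(3+\max\{2\lceil\log_2|C|\rceil,\lceil\log_2 n\rceil\})$; $\mathcal{C}(h,x)$ is the circuit's output on $x\in\mathcal{B}^n$, and $\bot$ if $h$ is malformed. Hence $|f|_{\mathcal{C}}=\min\{L(|C|,n): C \text{ computes } f\}$. A language is a subset $L\subseteq\mathcal{B}^*$, identified with its indicator function; $L|_n\in H^n$ is its restriction to inputs of length $n$. $\mathbf{P}$ is the class of languages decidable by a deterministic Turing machine in polynomial time.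 *)

theory Defs
  imports Complex_Main "HOL-Library.Landau_Symbols" "HOL-Library.Extended_Nat"
begin

datatype sym = S0 | S1 | Blank
datatype move = MoveL | MoveR | Stay

text \<open>States are 0..<tm_nstates; 0 is initial, 1 is accept, 2 is reject.
  Input tapes are read-only (the i-th input string followed by blanks), work tapes
  are read/write. The transition function reads the symbols under all heads
  (input heads first, then work heads) and returns the new state, the moves of
  the input heads, and for each work tape the symbol written and the move.
  Heads moving left at cell 0 stay at cell 0.\<close>

record tm =
  tm_ninp :: nat
  tm_nwork :: nat
  tm_nstates :: nat
  tm_delta :: "nat \<Rightarrow> sym list \<Rightarrow> nat \<times> move list \<times> (sym \<times> move) list"

type_synonym config = "nat \<times> nat list \<times> (nat \<Rightarrow> sym) list \<times> nat list"

definition wf_tm :: "tm \<Rightarrow> bool" where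
  "wf_tm M \<longleftrightarrow> tm_nstates M \<ge> 3 \<and>
     (\<forall>q r. q < tm_nstates M \<and> q \<notin> {1,2} \<and> length r = tm_ninp M + tm_nwork M \<longrightarrow>
        (case tm_delta M q r of (q', ims, wms) \<Rightarrow>
           q' < tm_nstates M \<and> length ims = tm_ninp M \<and> length wms = tm_nwork M))"

definition inp_sym :: "bool list \<Rightarrow> nat \<Rightarrow> sym" where
  "inp_sym x i = (if i < length x then (if x ! i then S1 else S0) else Blank)"

fun mv :: "move \<Rightarrow> nat \<Rightarrow> nat" where
  "mv MoveL p = p - 1"
| "mv MoveR p = Suc p"
| "mv Stay p = p"

definition tm_step :: "tm \<Rightarrow> bool list list \<Rightarrow> config \<Rightarrow> config" where
  "tm_step M xs c = (case c of (q, ips, wts, wps) \<Rightarrow>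
     if q = 1 \<or> q = 2 then c else
     (let r = map (\<lambda>i. inp_sym (xs ! i) (ips ! i)) [0..<length ips]
              @ map (\<lambda>i. (wts ! i) (wps ! i)) [0..<length wts];
          (q', ims, wms) = tm_delta M q r
      in (q',
          map (\<lambda>i. mv (ims ! i) (ips ! i)) [0..<length ips],
          map (\<lambda>i. (wts ! i)((wps ! i) := fst (wms ! i))) [0..<length wts],
          map (\<lambda>i. mv (snd (wms ! i)) (wps ! i)) [0..<length wps])))"

definition tm_init :: "tm \<Rightarrow> bool list list \<Rightarrow> config" where
  "tm_init M xs = (0, replicate (length xs) 0, replicate (tm_nwork M) (\<lambda>_. Blank),
                   replicate (tm_nwork M) 0)"

definition tm_run :: "tm \<Rightarrow> bool list list \<Rightarrow> nat \<Rightarrow> config" where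
  "tm_run M xs t = (tm_step M xs ^^ t) (tm_init M xs)"

definition halts_within :: "tm \<Rightarrow> bool list list \<Rightarrow> nat \<Rightarrow> bool" where
  "halts_within M xs t \<longleftrightarrow> fst (tm_run M xs t) \<in> {1, 2}"

definition accepts :: "tm \<Rightarrow> bool list list \<Rightarrow> bool" where
  "accepts M xs \<longleftrightarrow> (\<exists>t. fst (tm_run M xs t) = 1)"

type_synonym language = "bool list set"

definition in_P :: "language \<Rightarrow> bool" where
  "in_P L \<longleftrightarrow> (\<exists>M k. wf_tm M \<and> tm_ninp M = 1 \<and>
     (\<forall>x. halts_within M [x] (length x ^ k + k) \<and> (accepts M [x] \<longleftrightarrow> x \<in> L)))"

text \<open>None plays the role of \<bottom>.\<close>
type_synonym interp = "bool list \<Rightarrow> bool list \<Rightarrow> bool option"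

text \<open>H^n: Boolean functions on B^n (represented on bool lists, False off length n).\<close>
definition Hn :: "nat \<Rightarrow> (bool list \<Rightarrow> bool) set" where
  "Hn n = {f. \<forall>x. length x \<noteq> n \<longrightarrow> \<not> f x}"

definition prog_size :: "interp \<Rightarrow> nat \<Rightarrow> (bool list \<Rightarrow> bool) \<Rightarrow> enat" where
  "prog_size \<phi> n f =
     (if \<exists>h. \<forall>x. length x = n \<longrightarrow> \<phi> h x = Some (f x)
      then enat (LEAST k. \<exists>h. length h = k \<and> (\<forall>x. length x = n \<longrightarrow> \<phi> h x = Some (f x)))
      else \<infinity>)"

text \<open>Properties of the time-bounded universal interpreter U^c used here:
  every valid program has length at least 2 (it starts with some E(T)), and the
  interpreter is computed by a 2-input-tape, 3-work-tape machine that halts on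
  every (p,x) within beta*|x|^c + beta steps (beta uniform in p), accepting exactly
  when the interpreter's output is 1.\<close>
definition is_Uc :: "nat \<Rightarrow> interp \<Rightarrow> bool" where
  "is_Uc c \<phi> \<longleftrightarrow> (\<forall>p x. \<phi> p x \<noteq> None \<longrightarrow> length p \<ge> 2) \<and>
     (\<exists>M \<beta>. wf_tm M \<and> tm_ninp M = 2 \<and> tm_nwork M = 3 \<and>
        (\<forall>p x. halts_within M [p, x] (\<beta> * length x ^ c + \<beta>) \<and>
               (accepts M [p, x] \<longleftrightarrow> \<phi> p x = Some True)))"

text \<open>A circuit is a list of vertices in topological order; parents are referred to
  by (0-based) positions earlier in the list; input labels are 1..n; the last
  vertex is the unique sink (every other vertex has a child).\<close>
datatype gate = Inp nat | AndG nat nat | OrG nat nat | NotG nat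

fun gate_val :: "bool list \<Rightarrow> bool list \<Rightarrow> gate \<Rightarrow> bool" where
  "gate_val vs x (Inp j) = x ! (j - 1)"
| "gate_val vs x (AndG a b) = (vs ! a \<and> vs ! b)"
| "gate_val vs x (OrG a b) = (vs ! a \<or> vs ! b)"
| "gate_val vs x (NotG a) = (\<not> vs ! a)"

fun gate_parents :: "gate \<Rightarrow> nat set" where
  "gate_parents (Inp j) = {}"
| "gate_parents (AndG a b) = {a, b}"
| "gate_parents (OrG a b) = {a, b}"
| "gate_parents (NotG a) = {a}"

definition circ_vals :: "gate list \<Rightarrow> bool list \<Rightarrow> bool list" where
  "circ_vals C x = foldl (\<lambda>vs g. vs @ [gate_val vs x g]) [] C"

definition circ_out :: "gate list \<Rightarrow> bool list \<Rightarrow> bool" where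
  "circ_out C x = last (circ_vals C x)"

definition wf_circuit :: "nat \<Rightarrow> gate list \<Rightarrow> bool" where
  "wf_circuit n C \<longleftrightarrow> C \<noteq> [] \<and>
     (\<forall>i < length C. case C ! i of
         Inp j \<Rightarrow> 1 \<le> j \<and> j \<le> n
       | AndG a b \<Rightarrow> a < i \<and> b < i \<and> a \<noteq> b
       | OrG a b \<Rightarrow> a < i \<and> b < i \<and> a \<noteq> b
       | NotG a \<Rightarrow> a < i) \<and>
     (\<forall>i. Suc i < length C \<longrightarrow> (\<exists>j < length C. i \<in> gate_parents (C ! j)))"

definition circ_computes :: "nat \<Rightarrow> gate list \<Rightarrow> (bool list \<Rightarrow> bool) \<Rightarrow> bool" where
  "circ_computes n C f \<longleftrightarrow> wf_circuit n C \<and> (\<forall>x. length x = n \<longrightarrow> circ_out C x = f x)"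

definition clog :: "nat \<Rightarrow> nat" where
  "clog n = nat \<lceil>log 2 (real n)\<rceil>"

definition enc_len :: "nat \<Rightarrow> nat \<Rightarrow> nat" where
  "enc_len s n = 2 * clog n + 2 + s * (3 + max (2 * clog s) (clog n))"

definition circ_cplx :: "nat \<Rightarrow> (bool list \<Rightarrow> bool) \<Rightarrow> nat" where
  "circ_cplx n f = (LEAST k. \<exists>C. circ_computes n C f \<and> k = enc_len (length C) n)"

text \<open>sup { |f|_C / |f|_phi : f in H^n, |f|_phi <= n^d } (the set is finite; the sup of
  the empty set is taken to be 0, all ratios being nonnegative).\<close>
definition ratio_sup :: "interp \<Rightarrow> nat \<Rightarrow> nat \<Rightarrow> real" where
  "ratio_sup \<phi> d n = Max (insert 0
     {real (circ_cplx n f) / real (the_enat (prog_size \<phi> n f)) | f.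
        f \<in> Hn n \<and> prog_size \<phi> n f \<le> enat (n ^ d)})"

end

theory Submission
  imports Defs
begin

text \<open>A program p of U^c together with an input x is encoded as the single string
  pair_enc p x, in which every bit of p is preceded by a 1 and the end of p is marked by a 0.
  A one-input machine that decodes this string and then simulates the machine computing U^c
  runs in polynomial time, so its language L lies in P. If L had circuits C_m of size
  O(m^(1+tau)), then hardwiring the prefix of a shortest program h for f into C_m with
  m = 2|h| + 1 + n would give a circuit for f of size O(m^(1+tau)); its encoding length is
  O(m^(1+3tau)), which is O(|h| n^(1+gamma)) once |h| \<le> n^d and 3 tau d \<le> gamma.
  So the ratio supremum would be O(n^(1+gamma)), contrary to the hypothesis.\<close>

lemma tm_run_Suc: "tm_run M xs (Suc t) = tm_step M xs (tm_run M xs t)"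
  by (simp add: tm_run_def)

lemma tm_run_add: "tm_run M xs (t + s) = (tm_step M xs ^^ s) (tm_run M xs t)"
  by (simp add: tm_run_def funpow_add[of s t] add.commute)

lemma tm_step_halted: "fst c \<in> {1,2} \<Longrightarrow> tm_step M xs c = c"
  by (cases c) (auto simp: tm_step_def)

lemma tm_steps_halted: "fst c \<in> {1,2} \<Longrightarrow> (tm_step M xs ^^ s) c = c"
  by (induction s) (auto simp: tm_step_halted)

lemma tm_run_halted_stays: "fst (tm_run M xs t) \<in> {1,2} \<Longrightarrow> t \<le> t' \<Longrightarrow> tm_run M xs t' = tm_run M xs t"
  using tm_run_add[of M xs t "t' - t"] tm_steps_halted by (metis le_add_diff_inverse)

lemma halts_within_mono: "halts_within M xs t \<Longrightarrow> t \<le> t' \<Longrightarrow> halts_within M xs t'"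
  unfolding halts_within_def using tm_run_halted_stays by metis

lemma accepts_iff_run_accepts: "halts_within M xs T \<Longrightarrow> accepts M xs \<longleftrightarrow> fst (tm_run M xs T) = 1"
proof
  assume h: "halts_within M xs T" and "accepts M xs"
  then obtain t where t: "fst (tm_run M xs t) = 1" unfolding accepts_def by blast
  show "fst (tm_run M xs T) = 1"
  proof (cases "t \<le> T")
    case True then show ?thesis using tm_run_halted_stays[of M xs t T] t by simp
  next
    case False then show ?thesis using tm_run_halted_stays[of M xs T t] t h
      unfolding halts_within_def by simp
  qed
qed (auto simp: accepts_def)

lemma tm_step_lengths:
  "tm_step M xs (q, ips, wts, wps) = (q', ips', wts', wps') \<Longrightarrow>
    length ips' = length ips \<and> length wts' = length wts \<and> length wps' = length wps"
  by (auto simp: tm_step_def Let_def split: if_splits prod.splits)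

section \<open>A one-input machine running a two-input machine on an encoded pair\<close>

definition enc_bits :: "bool list \<Rightarrow> bool list" where
  "enc_bits p = concat (map (\<lambda>b. [True, b]) p)"

definition pair_enc :: "bool list \<Rightarrow> bool list \<Rightarrow> bool list" where
  "pair_enc p x = enc_bits p @ False # x"

definition sym_of :: "bool \<Rightarrow> sym" where "sym_of b = (if b then S1 else S0)"

definition blank :: "nat \<Rightarrow> sym" where "blank = (\<lambda>_. Blank)"

text \<open>The tape S0 S1 ... S1 (k cells); the S0 lets a head find the left end of the tape.\<close>
definition marker :: "nat \<Rightarrow> nat \<Rightarrow> sym" where
  "marker k = (\<lambda>i. if i < k then (if i = 0 then S0 else S1) else Blank)"

definition keep_tapes :: "sym list \<Rightarrow> move \<Rightarrow> move \<Rightarrow> move \<Rightarrow> (sym \<times> move) list" where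
 "keep_tapes r ma mb mx = [(r!1, ma), (r!2, mb), (r!3, mx), (r!4, Stay), (r!5, Stay), (r!6, Stay)]"

text \<open>Work tapes: 0 receives p, 1 a marker of length |p|, 2 receives x, 3-5 are the work
  tapes of M. States 0, 3, 4, 5 read the pairs 1b of enc_bits p (4 for the first pair) and
  stop at the separator 0; state 6 rewinds tapes 0 and 1; state 7 copies x; state 8 rewinds
  tapes 1 and 2; state q + 9 simulates state q of M, with the heads on tapes 0 and 2 as its
  input heads. The states 10 and 11 (M's accept and reject) lead to accept and reject.\<close>
definition pair_delta :: "tm \<Rightarrow> nat \<Rightarrow> sym list \<Rightarrow> nat \<times> move list \<times> (sym \<times> move) list" where
"pair_delta M q r = (if q = 0 then (if r!0 = S1 then (4, [MoveR], keep_tapes r Stay Stay Stay) else (2, [Stay], keep_tapes r Stay Stay Stay))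
 else if q = 3 then (if r!0 = S1 then (5, [MoveR], keep_tapes r Stay Stay Stay)
     else if r!0 = S0 then (6, [MoveR], keep_tapes r Stay Stay Stay) else (2, [Stay], keep_tapes r Stay Stay Stay))
 else if q = 4 \<or> q = 5 then (if r!0 = Blank then (2, [Stay], keep_tapes r Stay Stay Stay)
     else (3, [MoveR], [(r!0, MoveR), (if q = 4 then S0 else S1, MoveR), (r!3, Stay), (r!4, Stay), (r!5, Stay), (r!6, Stay)]))
 else if q = 6 then (if r!2 = S0 then (7, [Stay], keep_tapes r Stay Stay Stay) else (6, [Stay], keep_tapes r MoveL MoveL Stay))
 else if q = 7 then (if r!0 = Blank then (8, [Stay], keep_tapes r Stay Stay Stay)
     else (7, [MoveR], [(r!1, Stay), (r!2, MoveR), (r!0, MoveR), (r!4,Stay),(r!5,Stay),(r!6,Stay)]))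
 else if q = 8 then (if r!2 = S0 then (9, [Stay], keep_tapes r Stay Stay Stay) else (8, [Stay], keep_tapes r Stay MoveL MoveL))
 else if q = 10 then (1, [Stay], keep_tapes r Stay Stay Stay)
 else if q = 11 then (2, [Stay], keep_tapes r Stay Stay Stay)
 else if q \<ge> 9 then (case tm_delta M (q - 9) [r!1, r!3, r!4, r!5, r!6] of (q', ims, wms) \<Rightarrow>
     (q' + 9, [Stay], [(r!1, ims!0), (r!2, Stay), (r!3, ims!1)] @ wms))
 else (2, [Stay], keep_tapes r Stay Stay Stay))"

definition pair_tm :: "tm \<Rightarrow> tm" where
  "pair_tm M = \<lparr>tm_ninp = 1, tm_nwork = 6, tm_nstates = 9 + tm_nstates M, tm_delta = pair_delta M\<rparr>"

lemma wf_pair_tm: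
  assumes "wf_tm M" "tm_ninp M = 2" "tm_nwork M = 3"
  shows "wf_tm (pair_tm M)"
proof -
  have A: "tm_nstates M \<ge> 3" and B: "\<And>q r. q < tm_nstates M \<Longrightarrow> q \<notin> {1,2} \<Longrightarrow> length r = tm_ninp M + tm_nwork M \<Longrightarrow>
        (case tm_delta M q r of (q', ims, wms) \<Rightarrow>
           q' < tm_nstates M \<and> length ims = tm_ninp M \<and> length wms = tm_nwork M)"
    using assms unfolding wf_tm_def by auto
  show ?thesis unfolding wf_tm_def
  proof (intro conjI allI impI)
    show "3 \<le> tm_nstates (pair_tm M)" using A by (simp add: pair_tm_def)
  next
    fix q and r :: "sym list" assume h: "q < tm_nstates (pair_tm M) \<and> q \<notin> {1, 2} \<and> length r = tm_ninp (pair_tm M) + tm_nwork (pair_tm M)"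
    show "case tm_delta (pair_tm M) q r of (q', ims, wms) \<Rightarrow> q' < tm_nstates (pair_tm M) \<and> length ims = tm_ninp (pair_tm M) \<and> length wms = tm_nwork (pair_tm M)"
    proof (cases "q \<ge> 9 \<and> q \<noteq> 10 \<and> q \<noteq> 11")
      case True
      have "case tm_delta M (q-9) [r!1, r!3, r!4, r!5, r!6] of (q', ims, wms) \<Rightarrow>
           q' < tm_nstates M \<and> length ims = tm_ninp M \<and> length wms = tm_nwork M"
        using h True by (intro B) (auto simp: assms pair_tm_def)
      then show ?thesis using h True by (auto simp: pair_tm_def pair_delta_def assms split: prod.splits)
    next
      case False
      then show ?thesis using h A by (auto simp: pair_tm_def pair_delta_def keep_tapes_def)
    qed
  qed
qed

lemma pair_tm_step:
  "tm_step (pair_tm M) [y] (q, [i], [t0,t1,t2,t3,t4,t5], [h0,h1,h2,h3,h4,h5]) =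
    (if q = 1 \<or> q = 2 then (q, [i], [t0,t1,t2,t3,t4,t5], [h0,h1,h2,h3,h4,h5]) else
     (case pair_delta M q [inp_sym y i, t0 h0, t1 h1, t2 h2, t3 h3, t4 h4, t5 h5] of (q', ims, wms) \<Rightarrow>
      (q', [mv (ims!0) i],
       [t0(h0 := fst (wms!0)), t1(h1 := fst (wms!1)), t2(h2 := fst (wms!2)), t3(h3 := fst (wms!3)), t4(h4 := fst (wms!4)), t5(h5 := fst (wms!5))],
       [mv (snd (wms!0)) h0, mv (snd (wms!1)) h1, mv (snd (wms!2)) h2, mv (snd (wms!3)) h3, mv (snd (wms!4)) h4, mv (snd (wms!5)) h5])))"
  by (simp add: tm_step_def pair_tm_def upt_rec numeral_eq_Suc split: prod.splits)

lemma length_enc_bits[simp]: "length (enc_bits p) = 2 * length p"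
  by (induction p) (auto simp: enc_bits_def)

lemma enc_bits_append_nth: "j < length p \<Longrightarrow> (enc_bits p @ r) ! (2*j) = True \<and> (enc_bits p @ r) ! (2*j+1) = p ! j"
proof (induction p arbitrary: j)
  case (Cons a p) then show ?case
    by (cases j) (auto simp: enc_bits_def)
qed simp

lemma inp_sym_lt: "i < length y \<Longrightarrow> inp_sym y i = sym_of (y ! i)"
  by (simp add: inp_sym_def sym_of_def)
lemma inp_sym_ge: "length y \<le> i \<Longrightarrow> inp_sym y i = Blank"
  by (simp add: inp_sym_def)

lemma inp_sym_take_upd: "k < length p \<Longrightarrow> (inp_sym (take k p))(k := sym_of (p ! k)) = inp_sym (take (Suc k) p)"
  by (rule ext) (auto simp: inp_sym_def sym_of_def take_Suc_conv_app_nth nth_append)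

lemma inp_sym_Nil: "inp_sym [] = blank" by (rule ext) (simp add: inp_sym_def blank_def)

lemma marker_upd: "1 \<le> k \<Longrightarrow> (marker k)(k := S1) = marker (Suc k)"
  by (rule ext) (auto simp: marker_def)
lemma marker_1: "blank(0 := S0) = marker 1"
  by (rule ext) (auto simp: marker_def blank_def)

lemma sym_of_ne[simp]: "sym_of b \<noteq> Blank" by (simp add: sym_of_def)

lemma pair_tm_init: "tm_init (pair_tm M) [y] = (0, [0], [blank,blank,blank,blank,blank,blank], [0,0,0,0,0,0])"
  by (simp add: tm_init_def pair_tm_def blank_def numeral_eq_Suc)

lemma pair_tm_read_prog_aux:
  assumes y: "y = enc_bits p @ rest"
  shows "j < length p \<Longrightarrow> (tm_step (pair_tm M) [y] ^^ (2*Suc j)) (tm_init (pair_tm M) [y]) =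
     (3, [2*Suc j], [inp_sym (take (Suc j) p), marker (Suc j), blank, blank, blank, blank], [Suc j,Suc j,0,0,0,0])"
proof (induction j)
  case 0
  then have k: "0 < length p" by simp
  have ly: "length y = 2*length p + length rest" by (simp add: y)
  have l: "0 < length y" "1 < length y" using k unfolding ly by linarith+
  have e: "y ! (2*0) = True \<and> y ! (2*0+1) = p ! 0" unfolding y by (rule enc_bits_append_nth) (use k in auto)
  then have "y ! 0 = True" "y ! 1 = p ! 0" by simp_all
  then have s0: "inp_sym y 0 = S1" "inp_sym y (Suc 0) = sym_of (p!0)" using l by (auto simp: inp_sym_lt sym_of_def)
  have "(tm_step (pair_tm M) [y] ^^ (2 * Suc 0)) (tm_init (pair_tm M) [y]) = tm_step (pair_tm M) [y] (tm_step (pair_tm M) [y] (tm_init (pair_tm M) [y]))"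
    by (simp add: numeral_eq_Suc)
  also have "\<dots> = (3, [2], [blank(0 := sym_of (p!0)), blank(0 := S0), blank, blank, blank, blank], [1,1,0,0,0,0])"
    by (simp add: pair_tm_init pair_tm_step pair_delta_def keep_tapes_def s0 fun_upd_idem blank_def)
  also have "blank(0 := sym_of (p!0)) = inp_sym (take 1 p)"
    using inp_sym_take_upd[of 0 p] k by (cases p) (auto simp: inp_sym_Nil)
  finally show ?case by (simp add: marker_1)
next
  case (Suc j)
  define k where "k = Suc j"
  have step: "k < length p" "1 \<le> k" using Suc.prems k_def by auto
  have IH: "(tm_step (pair_tm M) [y] ^^ (2*k)) (tm_init (pair_tm M) [y]) =
     (3, [2*k], [inp_sym (take k p), marker k, blank, blank, blank, blank], [k,k,0,0,0,0])"
    using Suc k_def by simp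
  have l: "2*k < length y" "2*k+1 < length y" using step y by auto
  have e: "y ! (2*k) = True \<and> y ! (2*k+1) = p ! k" unfolding y by (rule enc_bits_append_nth) (use step in auto)
  then have "y ! (2*k) = True" "y ! (2*k+1) = p ! k" by simp_all
  then have s0: "inp_sym y (2*k) = S1" "inp_sym y (Suc (2*k)) = sym_of (p!k)" using l by (auto simp: inp_sym_lt sym_of_def)
  have ne: "marker k k = Blank" "inp_sym (take k p) k = Blank" by (auto simp: marker_def inp_sym_def)
  have "(tm_step (pair_tm M) [y] ^^ (2*Suc k)) (tm_init (pair_tm M) [y]) =
     tm_step (pair_tm M) [y] (tm_step (pair_tm M) [y] ((tm_step (pair_tm M) [y] ^^ (2*k)) (tm_init (pair_tm M) [y])))"
    by simp
  also have "\<dots> = (3, [2*Suc k], [(inp_sym (take k p))(k := sym_of (p!k)), (marker k)(k := S1), blank, blank, blank, blank], [Suc k,Suc k,0,0,0,0])"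
    using step by (simp add: IH pair_tm_step pair_delta_def keep_tapes_def s0 ne fun_upd_idem blank_def)
  finally show ?case using step inp_sym_take_upd[of k p] marker_upd[of k] k_def by simp
qed

lemma pair_tm_read_prog:
  assumes y: "y = enc_bits p @ rest" and p: "p \<noteq> []"
  shows "(tm_step (pair_tm M) [y] ^^ (2*length p)) (tm_init (pair_tm M) [y]) =
     (3, [2*length p], [inp_sym p, marker (length p), blank, blank, blank, blank], [length p,length p,0,0,0,0])"
  using pair_tm_read_prog_aux[OF y, of "length p - 1"] p by simp

lemma pair_tm_rewind_prog: "\<forall>h. 1 \<le> h \<longrightarrow> B h \<noteq> S0 \<Longrightarrow>
  (tm_step (pair_tm M) [y] ^^ j) (6, [i], [A,B,X,W1,W2,W3], [j,j,0,0,0,0]) = (6, [i], [A,B,X,W1,W2,W3], [0,0,0,0,0,0])"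
proof (induction j)
  case (Suc j)
  have "B (Suc j) \<noteq> S0" using Suc.prems by auto
  then have "tm_step (pair_tm M) [y] (6, [i], [A,B,X,W1,W2,W3], [Suc j,Suc j,0,0,0,0]) = (6, [i], [A,B,X,W1,W2,W3], [j,j,0,0,0,0])"
    by (simp add: pair_tm_step pair_delta_def keep_tapes_def)
  then show ?case using Suc by (simp only: funpow_Suc_right comp_apply)
qed simp

lemma pair_tm_rewind_prog_done: "B 0 = S0 \<Longrightarrow>
  tm_step (pair_tm M) [y] (6, [i], [A,B,X,W1,W2,W3], [0,0,0,0,0,0]) = (7, [i], [A,B,X,W1,W2,W3], [0,0,0,0,0,0])"
  by (simp add: pair_tm_step pair_delta_def keep_tapes_def fun_upd_idem)

lemma pair_tm_copy_input: assumes "\<forall>j<length x. y!(i0+j) = x!j" "length y = i0 + length x"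
  shows "j \<le> length x \<Longrightarrow> (tm_step (pair_tm M) [y] ^^ j) (7,[i0],[A,B,blank,W1,W2,W3],[0,0,0,0,0,0]) =
     (7,[i0+j],[A,B,inp_sym (take j x),W1,W2,W3],[0,j,j,0,0,0])"
proof (induction j)
  case 0 then show ?case by (simp add: inp_sym_Nil)
next
  case (Suc j)
  then have jl: "j < length x" by simp
  have s: "inp_sym y (i0 + j) = sym_of (x!j)" using assms jl by (simp add: inp_sym_lt)
  have ne: "inp_sym (take j x) j = Blank" by (simp add: inp_sym_def)
  have "tm_step (pair_tm M) [y] (7,[i0+j],[A,B,inp_sym (take j x),W1,W2,W3],[0,j,j,0,0,0]) =
     (7,[i0+Suc j],[A,B,(inp_sym (take j x))(j := sym_of (x!j)),W1,W2,W3],[0,Suc j,Suc j,0,0,0])"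
    by (simp add: pair_tm_step pair_delta_def keep_tapes_def s ne)
  then show ?case using Suc jl inp_sym_take_upd[of j x] by (simp only: funpow.simps(2) comp_apply)
qed

lemma pair_tm_copy_input_done: "length y \<le> i \<Longrightarrow>
  tm_step (pair_tm M) [y] (7, [i], [A,B,X,W1,W2,W3], [0,j,j,0,0,0]) = (8, [i], [A,B,X,W1,W2,W3], [0,j,j,0,0,0])"
  by (simp add: pair_tm_step pair_delta_def keep_tapes_def inp_sym_ge)

lemma pair_tm_rewind_input: "\<forall>h. 1 \<le> h \<longrightarrow> B h \<noteq> S0 \<Longrightarrow>
  (tm_step (pair_tm M) [y] ^^ j) (8, [i], [A,B,X,W1,W2,W3], [0,j,j,0,0,0]) = (8, [i], [A,B,X,W1,W2,W3], [0,0,0,0,0,0])"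
proof (induction j)
  case (Suc j)
  have "B (Suc j) \<noteq> S0" using Suc.prems by auto
  then have "tm_step (pair_tm M) [y] (8, [i], [A,B,X,W1,W2,W3], [0,Suc j,Suc j,0,0,0]) = (8, [i], [A,B,X,W1,W2,W3], [0,j,j,0,0,0])"
    by (simp add: pair_tm_step pair_delta_def keep_tapes_def)
  then show ?case using Suc by (simp only: funpow_Suc_right comp_apply)
qed simp

lemma pair_tm_rewind_input_done: "B 0 = S0 \<Longrightarrow>
  tm_step (pair_tm M) [y] (8, [i], [A,B,X,W1,W2,W3], [0,0,0,0,0,0]) = (9, [i], [A,B,X,W1,W2,W3], [0,0,0,0,0,0])"
  by (simp add: pair_tm_step pair_delta_def keep_tapes_def fun_upd_idem)

lemma marker_props: "1 \<le> k \<Longrightarrow> marker k 0 = S0" "\<forall>h. 1 \<le> h \<longrightarrow> marker k h \<noteq> S0"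
  by (auto simp: marker_def)

lemma pair_tm_preamble:
  assumes y: "y = pair_enc p x" and p: "p \<noteq> []"
  shows "(tm_step (pair_tm M) [y] ^^ (3*length p + 2*length x + 4)) (tm_init (pair_tm M) [y]) =
     (9, [length y], [inp_sym p, marker (length p), inp_sym x, blank, blank, blank], [0,0,0,0,0,0])"
proof -
  let ?f = "tm_step (pair_tm M) [y]"
  let ?k = "length p" and ?n = "length x"
  have k1: "1 \<le> ?k" using p by (cases p) auto
  have ly: "length y = 2*?k + 1 + ?n" by (simp add: y pair_enc_def)
  have y2k: "inp_sym y (2*?k) = S0" unfolding y pair_enc_def by (simp add: inp_sym_def nth_append)
  have xs: "\<forall>j<length x. y!(2*?k+1+j) = x!j" by (simp add: y pair_enc_def nth_append)
  have e: "3*?k + 2*?n + 4 = Suc (?n + (Suc (?n + (Suc (?k + Suc (2 * ?k))))))" by simp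
  have "(?f ^^ (3*?k + 2*?n + 4)) (tm_init (pair_tm M) [y]) =
      ?f ((?f ^^ ?n) (?f ((?f ^^ ?n) (?f ((?f ^^ ?k) (?f ((?f ^^ (2*?k)) (tm_init (pair_tm M) [y]))))))))"
    unfolding e by (simp only: funpow.simps(2) funpow_add comp_apply)
  also have "?f ((?f ^^ (2*?k)) (tm_init (pair_tm M) [y])) = (6, [2*?k+1], [inp_sym p, marker ?k, blank, blank, blank, blank], [?k,?k,0,0,0,0])"
    by (simp add: pair_tm_read_prog[OF y[unfolded pair_enc_def] p] pair_tm_step pair_delta_def keep_tapes_def y2k)
  also have "(?f ^^ ?k) \<dots> = (6, [2*?k+1], [inp_sym p, marker ?k, blank, blank, blank, blank], [0,0,0,0,0,0])"
    by (rule pair_tm_rewind_prog) (rule marker_props)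
  also have "?f \<dots> = (7, [2*?k+1], [inp_sym p, marker ?k, blank, blank, blank, blank], [0,0,0,0,0,0])"
    by (rule pair_tm_rewind_prog_done) (rule marker_props(1)[OF k1])
  also have "(?f ^^ ?n) \<dots> = (7, [2*?k+1+?n], [inp_sym p, marker ?k, inp_sym (take ?n x), blank, blank, blank], [0,?n,?n,0,0,0])"
    by (rule pair_tm_copy_input[OF xs]) (simp_all add: ly)
  also have "?f \<dots> = (8, [2*?k+1+?n], [inp_sym p, marker ?k, inp_sym x, blank, blank, blank], [0,?n,?n,0,0,0])"
    by (simp add: pair_tm_copy_input_done ly)
  also have "(?f ^^ ?n) \<dots> = (8, [2*?k+1+?n], [inp_sym p, marker ?k, inp_sym x, blank, blank, blank], [0,0,0,0,0,0])"
    by (rule pair_tm_rewind_input) (rule marker_props)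
  also have "?f \<dots> = (9, [2*?k+1+?n], [inp_sym p, marker ?k, inp_sym x, blank, blank, blank], [0,0,0,0,0,0])"
    by (rule pair_tm_rewind_input_done) (rule marker_props(1)[OF k1])
  finally show ?thesis by (simp add: ly)
qed

lemma blank_apply[simp]: "blank i = Blank" by (simp add: blank_def)

definition embed_config :: "bool list \<Rightarrow> bool list \<Rightarrow> bool list \<Rightarrow> (nat \<Rightarrow> sym) \<Rightarrow> config \<Rightarrow> config" where
  "embed_config p x y B c = (case c of (q, ips, wts, wps) \<Rightarrow>
     (q + 9, [length y], [inp_sym p, B, inp_sym x] @ wts, [ips!0, 0, ips!1] @ wps))"

lemma tm_step_2_3:
  "tm_step M [p,x] (q, [a,b], [w1,w2,w3], [h1,h2,h3]) =
    (if q = 1 \<or> q = 2 then (q, [a,b], [w1,w2,w3], [h1,h2,h3]) else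
     (case tm_delta M q [inp_sym p a, inp_sym x b, w1 h1, w2 h2, w3 h3] of (q', ims, wms) \<Rightarrow>
      (q', [mv (ims!0) a, mv (ims!1) b],
       [w1(h1 := fst (wms!0)), w2(h2 := fst (wms!1)), w3(h3 := fst (wms!2))],
       [mv (snd (wms!0)) h1, mv (snd (wms!1)) h2, mv (snd (wms!2)) h3])))"
  by (simp add: tm_step_def upt_rec numeral_eq_Suc split: prod.splits)

lemma pair_tm_sim_step:
  assumes "q \<notin> {1,2}"
  shows "tm_step (pair_tm M) [y] (embed_config p x y B (q,[a,b],[w1,w2,w3],[h1,h2,h3])) =
         embed_config p x y B (tm_step M [p,x] (q,[a,b],[w1,w2,w3],[h1,h2,h3]))"
proof -
  have q: "q + 9 \<noteq> 10" "q + 9 \<noteq> 11" using assms by auto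
  show ?thesis using assms q
    by (simp add: embed_config_def tm_step_2_3 pair_tm_step pair_delta_def inp_sym_ge fun_upd_idem split: prod.splits)
qed

lemma pair_tm_sim_halt:
  assumes "q \<in> {1,2}"
  shows "fst (tm_step (pair_tm M) [y] (embed_config p x y B (q,[a,b],[w1,w2,w3],[h1,h2,h3]))) = q"
  using assms by (auto simp: embed_config_def pair_tm_step pair_delta_def)

lemma tm_run_shape_2_3:
  assumes "tm_nwork M = 3"
  shows "\<exists>q a b w1 w2 w3 h1 h2 h3. tm_run M [p,x] t = (q,[a,b],[w1,w2,w3],[h1,h2,h3])"
proof (induction t)
  case 0 then show ?case by (simp add: tm_run_def tm_init_def assms numeral_eq_Suc)
next
  case (Suc t)
  then obtain q a b w1 w2 w3 h1 h2 h3 where e: "tm_run M [p,x] t = (q,[a,b],[w1,w2,w3],[h1,h2,h3])" by blast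
  obtain q' ips' wts' wps' where e2: "tm_run M [p,x] (Suc t) = (q', ips', wts', wps')" by (cases "tm_run M [p,x] (Suc t)") auto
  have "length ips' = 2 \<and> length wts' = 3 \<and> length wps' = 3"
    using tm_step_lengths[of M "[p,x]" q "[a,b]" "[w1,w2,w3]" "[h1,h2,h3]" q' ips' wts' wps'] e e2
    by (simp add: tm_run_Suc)
  then show ?case using e2 by (auto simp: length_Suc_conv numeral_eq_Suc)
qed

lemma pair_tm_sim_run:
  assumes nw: "tm_nwork M = 3"
    and pre: "(tm_step (pair_tm M) [y] ^^ t0) (tm_init (pair_tm M) [y]) = embed_config p x y B (tm_init M [p,x])"
  shows "(fst (tm_run M [p,x] t) \<in> {1,2} \<longrightarrow> fst (tm_run (pair_tm M) [y] (t0 + t + 1)) = fst (tm_run M [p,x] t)) \<and>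
         (fst (tm_run M [p,x] t) \<notin> {1,2} \<longrightarrow> tm_run (pair_tm M) [y] (t0 + t) = embed_config p x y B (tm_run M [p,x] t))"
proof (induction t)
  case 0
  have "fst (tm_run M [p,x] 0) = 0" by (simp add: tm_run_def tm_init_def)
  then show ?case using pre by (simp add: tm_run_def)
next
  case (Suc t)
  obtain q a b w1 w2 w3 h1 h2 h3 where e: "tm_run M [p,x] t = (q,[a,b],[w1,w2,w3],[h1,h2,h3])"
    using tm_run_shape_2_3[OF nw, of p x t] by blast
  show ?case
  proof (cases "q \<in> {1,2}")
    case True
    then have hs: "tm_run M [p,x] (Suc t) = tm_run M [p,x] t" using e by (simp add: tm_run_Suc tm_step_halted)
    have "fst (tm_run (pair_tm M) [y] (t0 + t + 1)) = q" using Suc.IH e True by auto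
    then have "tm_run (pair_tm M) [y] (t0 + Suc t + 1) = tm_run (pair_tm M) [y] (t0 + t + 1)"
      using True by (simp add: tm_run_Suc tm_step_halted)
    then show ?thesis using hs e True \<open>fst (tm_run (pair_tm M) [y] (t0 + t + 1)) = q\<close> by simp
  next
    case False
    have r: "tm_run (pair_tm M) [y] (t0 + t) = embed_config p x y B (tm_run M [p,x] t)" using Suc.IH e False by simp
    have r2: "tm_run (pair_tm M) [y] (t0 + Suc t) = embed_config p x y B (tm_run M [p,x] (Suc t))"
      using r False e by (simp add: tm_run_Suc pair_tm_sim_step)
    obtain q' a' b' w1' w2' w3' h1' h2' h3' where e': "tm_run M [p,x] (Suc t) = (q',[a',b'],[w1',w2',w3'],[h1',h2',h3'])"
      using tm_run_shape_2_3[OF nw, of p x "Suc t"] by blast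
    have sh: "fst (tm_step (pair_tm M) [y] (embed_config p x y B (q',[a',b'],[w1',w2',w3'],[h1',h2',h3']))) = q'" if "q' \<in> {1,2}"
      using that by (rule pair_tm_sim_halt)
    show ?thesis using r2 e' sh by (simp add: tm_run_Suc)
  qed
qed

lemma tm_init_2_3: "tm_nwork M = 3 \<Longrightarrow> tm_init M [p,x] = (0,[0,0],[blank,blank,blank],[0,0,0])"
  by (simp add: tm_init_def blank_def numeral_eq_Suc)

lemma pair_tm_on_pair_enc:
  assumes nw: "tm_nwork M = 3" and hM: "halts_within M [p,x] T" and p: "p \<noteq> []"
  shows "halts_within (pair_tm M) [pair_enc p x] (3*length p + 2*length x + 4 + T + 1) \<and>
         (accepts (pair_tm M) [pair_enc p x] \<longleftrightarrow> accepts M [p,x])"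
proof -
  let ?y = "pair_enc p x" and ?t0 = "3*length p + 2*length x + 4"
  have pre: "(tm_step (pair_tm M) [?y] ^^ ?t0) (tm_init (pair_tm M) [?y]) =
      embed_config p x ?y (marker (length p)) (tm_init M [p,x])"
    using pair_tm_preamble[OF refl p, of x M] by (simp add: tm_init_2_3[OF nw] embed_config_def)
  have hT: "fst (tm_run M [p,x] T) \<in> {1,2}" using hM unfolding halts_within_def .
  have e: "fst (tm_run (pair_tm M) [?y] (?t0 + T + 1)) = fst (tm_run M [p,x] T)"
    using pair_tm_sim_run[OF nw pre, of T] hT by blast
  have h': "halts_within (pair_tm M) [?y] (?t0 + T + 1)" using e hT unfolding halts_within_def by simp
  show ?thesis using h' accepts_iff_run_accepts[OF h'] accepts_iff_run_accepts[OF hM] e by simp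
qed

fun dec_bits :: "bool list \<Rightarrow> bool list \<times> bool list" where
  "dec_bits (True # b # r) = (b # fst (dec_bits r), snd (dec_bits r))"
| "dec_bits r = ([], r)"

lemma enc_bits_dec_bits:
  "y = enc_bits (fst (dec_bits y)) @ snd (dec_bits y) \<and> \<not> (\<exists>b r. snd (dec_bits y) = True # b # r)"
  by (induction y rule: dec_bits.induct) (auto simp: enc_bits_def)

lemma pair_tm_rejects_without_prog:
  assumes "y = [] \<or> y = [True] \<or> (\<exists>x. y = False # x)"
  shows "halts_within (pair_tm M) [y] 2"
proof -
  have "fst (tm_run (pair_tm M) [y] 1) = 2" if "y \<noteq> [True]"
    using assms that
    by (auto simp: tm_run_def pair_tm_init pair_tm_step pair_delta_def keep_tapes_def inp_sym_def)
  moreover have "fst (tm_run (pair_tm M) [[True]] 2) = 2"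
    by (simp add: tm_run_def pair_tm_init pair_tm_step pair_delta_def keep_tapes_def inp_sym_def
        numeral_eq_Suc)
  ultimately show ?thesis
    using halts_within_mono[of "pair_tm M" "[y]" 1 2] unfolding halts_within_def by fastforce
qed

lemma pair_tm_rejects_unterminated:
  assumes y: "y = enc_bits p @ rest" and p: "p \<noteq> []" and rest: "rest = [] \<or> rest = [True]"
  shows "halts_within (pair_tm M) [y] (length y + 2)"
proof -
  let ?k = "length p"
  have read: "tm_run (pair_tm M) [y] (2 * ?k) =
      (3, [2 * ?k], [inp_sym p, marker ?k, blank, blank, blank, blank], [?k, ?k, 0, 0, 0, 0])"
    using pair_tm_read_prog[OF y p, of M] by (simp add: tm_run_def)
  have "fst (tm_run (pair_tm M) [y] (length y + 1)) = 2"
    using rest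
  proof
    assume "rest = []"
    then have "length y = 2 * ?k" using y by simp
    then show ?thesis
      by (simp add: tm_run_Suc read pair_tm_step pair_delta_def keep_tapes_def inp_sym_ge)
  next
    assume r: "rest = [True]"
    then have ly: "length y = Suc (2 * ?k)" using y by simp
    have "inp_sym y (2 * ?k) = S1" using y r by (simp add: inp_sym_def nth_append)
    then show ?thesis
      by (simp add: ly tm_run_Suc read pair_tm_step pair_delta_def keep_tapes_def inp_sym_ge)
  qed
  then show ?thesis
    using halts_within_mono[of "pair_tm M" "[y]" "length y + 1"] unfolding halts_within_def by simp
qed

lemma pair_tm_pair_enc_or_halts:
  "(\<exists>p x. p \<noteq> [] \<and> y = pair_enc p x) \<or> halts_within (pair_tm M) [y] (length y + 2)"
proof -
  obtain p rest where y: "y = enc_bits p @ rest" and no_pair: "\<not> (\<exists>b r. rest = True # b # r)"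
    using enc_bits_dec_bits[of y] by blast
  have rest: "rest = [] \<or> rest = [True] \<or> (\<exists>x. rest = False # x)"
    using no_pair by (cases rest rule: remdups_adj.cases) auto
  show ?thesis
  proof (cases "p = []")
    case True
    then have "halts_within (pair_tm M) [y] 2"
      using y rest by (intro pair_tm_rejects_without_prog) (simp add: enc_bits_def)
    then show ?thesis using halts_within_mono by fastforce
  next
    case False
    then show ?thesis
      using y rest pair_tm_rejects_unterminated[of y p rest M] unfolding pair_enc_def by blast
  qed
qed

lemma poly_le_pow_plus: "(a::nat) * (L^c + L + 1) \<le> L^(c+1+3*a) + (c+1+3*a)"
proof (cases "L \<le> 1")
  case True
  then have "L = 0 \<or> L = 1" by auto
  then have "L^c + L + 1 \<le> 3" by (auto simp: power_0_left)
  then have "a * (L^c + L + 1) \<le> 3 * a" by simp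
  then show ?thesis by linarith
next
  case False
  then have L2: "2 \<le> L" by simp
  have L1: "1 \<le> L" using L2 by simp
  have a1: "L^c \<le> L^(c+1)" by (rule power_increasing) (use L1 in auto)
  have a2: "L \<le> L^(c+1)" using power_increasing[of 1 "c+1" L] L1 by simp
  have a3: "1 \<le> L^(c+1)" using L1 by simp
  have "a * (L^c + L + 1) \<le> a * (3 * L^(c+1))" proof (rule mult_left_mono)
    show "L ^ c + L + 1 \<le> 3 * L ^ (c + 1)" using a1 a2 a3 by linarith
  qed simp
  also have "\<dots> = (3*a) * L^(c+1)" by simp
  also have "(3*a) * L^(c+1) \<le> 2^(3*a) * L^(c+1)" by (rule mult_right_mono) (simp_all add: less_imp_le_nat)
  also have "(2::nat)^(3*a) * L^(c+1) \<le> L^(3*a) * L^(c+1)" by (rule mult_right_mono) (use L2 in \<open>simp_all add: power_mono\<close>)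
  also have "L^(3*a) * L^(c+1) = L^(c+1+3*a)" by (simp add: power_add)
  finally show ?thesis by linarith
qed
lemma pair_tm_halts_within:
  assumes nw: "tm_nwork M = 3" and hM: "\<forall>p x. halts_within M [p,x] (\<beta> * length x ^ c + \<beta>)"
  shows "halts_within (pair_tm M) [y] ((\<beta> + 5) * (length y ^ c + length y + 1))"
proof -
  let ?L = "length y"
  have expand: "(\<beta> + 5) * (?L^c + ?L + 1) = \<beta> * ?L^c + \<beta> * ?L + \<beta> + 5 * ?L^c + 5 * ?L + 5"
    by (simp add: algebra_simps)
  consider "halts_within (pair_tm M) [y] (?L + 2)" | p x where "p \<noteq> []" "y = pair_enc p x"
    using pair_tm_pair_enc_or_halts[of y M] by blast
  then show ?thesis
  proof cases
    case 1
    then show ?thesis using expand halts_within_mono by fastforce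
  next
    case 2
    have run: "halts_within (pair_tm M) [y] (3*length p + 2*length x + 4 + (\<beta> * length x ^ c + \<beta>) + 1)"
      using pair_tm_on_pair_enc[OF nw hM[rule_format, of p x] 2(1)] 2(2) by blast
    have ly: "?L = 2*length p + 1 + length x" using 2 by (simp add: pair_enc_def)
    then have "\<beta> * length x ^ c \<le> \<beta> * ?L ^ c" by (simp add: power_mono)
    then have "3*length p + 2*length x + 4 + (\<beta> * length x ^ c + \<beta>) + 1 \<le> (\<beta> + 5) * (?L^c + ?L + 1)"
      using expand ly by linarith
    then show ?thesis using run halts_within_mono by blast
  qed
qed

lemma in_P_pair_tm:
  assumes wf: "wf_tm M" "tm_ninp M = 2" "tm_nwork M = 3"
    and hM: "\<forall>p x. halts_within M [p,x] (\<beta> * length x ^ c + \<beta>)"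
  shows "in_P {y. accepts (pair_tm M) [y]}"
proof -
  define k where "k = c + 1 + 3 * (\<beta> + 5)"
  have "halts_within (pair_tm M) [y] (length y ^ k + k)" for y
    using pair_tm_halts_within[OF wf(3) hM, of y] poly_le_pow_plus[of "\<beta> + 5" "length y" c]
      halts_within_mono unfolding k_def by blast
  moreover have "wf_tm (pair_tm M)" using wf_pair_tm[OF wf] .
  moreover have "tm_ninp (pair_tm M) = 1" by (simp add: pair_tm_def)
  ultimately show ?thesis unfolding in_P_def by blast
qed

section \<open>Hardwiring a prefix of the input into a circuit\<close>

definition gate_wf :: "nat \<Rightarrow> nat \<Rightarrow> gate \<Rightarrow> bool" where
  "gate_wf n i g = (case g of
       Inp j \<Rightarrow> 1 \<le> j \<and> j \<le> n
     | AndG a b \<Rightarrow> a < i \<and> b < i \<and> a \<noteq> b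
     | OrG a b \<Rightarrow> a < i \<and> b < i \<and> a \<noteq> b
     | NotG a \<Rightarrow> a < i)"

lemma wf_circuit_iff:
  "wf_circuit n C \<longleftrightarrow> C \<noteq> [] \<and> (\<forall>i < length C. gate_wf n i (C ! i)) \<and>
     (\<forall>i. Suc i < length C \<longrightarrow> (\<exists>j < length C. i \<in> gate_parents (C ! j)))"
  by (simp add: wf_circuit_def gate_wf_def)

text \<open>Gate i of C becomes the block x1, \<not>x1, x1 \<or> \<not>x1, g', g' \<and> (x1 \<or> \<not>x1) at positions 5i..5i+4,
  where g' is gate i reading its parents at their positions 5a+4 and with a hardwired input
  bit replaced by the constant x1 \<or> \<not>x1 or \<not>(x1 \<or> \<not>x1). The padding keeps the parents of every
  gate distinct and gives every vertex but the last a child, as wf_circuit demands. The input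
  x1 must exist, hence n \<ge> 1 below.\<close>
fun hw_gate :: "bool list \<Rightarrow> nat \<Rightarrow> gate \<Rightarrow> gate" where
  "hw_gate pre b (Inp j) = (if j \<le> length pre then (if pre!(j-1) then OrG b (b+1) else NotG (b+2)) else Inp (j - length pre))"
| "hw_gate pre b (AndG a a') = AndG (5*a+4) (5*a'+4)"
| "hw_gate pre b (OrG a a') = OrG (5*a+4) (5*a'+4)"
| "hw_gate pre b (NotG a) = NotG (5*a+4)"

definition hw_block :: "bool list \<Rightarrow> nat \<Rightarrow> gate \<Rightarrow> gate list" where
  "hw_block pre i g = [Inp 1, NotG (5*i), OrG (5*i) (5*i+1), hw_gate pre (5*i) g, AndG (5*i+2) (5*i+3)]"

definition hw_blocks :: "bool list \<Rightarrow> gate list \<Rightarrow> nat \<Rightarrow> gate list" where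
  "hw_blocks pre C k = concat (map (\<lambda>i. hw_block pre i (C!i)) [0..<k])"

definition hardwire :: "bool list \<Rightarrow> gate list \<Rightarrow> gate list" where
  "hardwire pre C = hw_blocks pre C (length C)"

lemma length_hw_block[simp]: "length (hw_block pre i g) = 5" by (simp add: hw_block_def)

lemma length_hw_blocks[simp]: "length (hw_blocks pre C k) = 5*k"
  by (induction k) (auto simp: hw_blocks_def)

lemma hw_blocks_Suc: "hw_blocks pre C (Suc k) = hw_blocks pre C k @ hw_block pre k (C!k)"
  by (simp add: hw_blocks_def)

lemma hw_blocks_nth: "i < k \<Longrightarrow> r < 5 \<Longrightarrow> hw_blocks pre C k ! (5*i + r) = hw_block pre i (C!i) ! r"
proof (induction k)
  case (Suc k)
  show ?case
  proof (cases "i < k")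
    case True
    then have "5*i + r < 5*k" using Suc by linarith
    then show ?thesis using Suc True by (simp add: hw_blocks_Suc nth_append)
  next
    case False
    then have "i = k" using Suc by simp
    then show ?thesis by (simp add: hw_blocks_Suc nth_append)
  qed
qed simp

lemma circ_vals_snoc: "circ_vals (xs @ [g]) x = circ_vals xs x @ [gate_val (circ_vals xs x) x g]"
  by (simp add: circ_vals_def)

lemma length_circ_vals[simp]: "length (circ_vals C x) = length C"
  by (induction C rule: rev_induct) (auto simp: circ_vals_snoc, simp add: circ_vals_def)

lemma circ_vals_take: "circ_vals (take k C) x = take k (circ_vals C x)"
proof (induction C rule: rev_induct)
  case (snoc g C)
  then show ?case by (cases "k \<le> length C") (auto simp: circ_vals_snoc take_append)
qed (simp add: circ_vals_def)

lemma circ_vals_nth: "i < length C \<Longrightarrow> circ_vals C y ! i = gate_val (take i (circ_vals C y)) y (C!i)"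
proof -
  assume i: "i < length C"
  have "take (Suc i) C = take i C @ [C!i]" using i by (simp add: take_Suc_conv_app_nth)
  then have "circ_vals (take (Suc i) C) y = take i (circ_vals C y) @ [gate_val (take i (circ_vals C y)) y (C!i)]"
    by (simp add: circ_vals_snoc circ_vals_take)
  then have "take (Suc i) (circ_vals C y) ! i = gate_val (take i (circ_vals C y)) y (C!i)"
    by (metis circ_vals_take length_circ_vals length_take min.absorb4 nth_append_length i)
  then show ?thesis using i by simp
qed

lemma circ_vals_app: "circ_vals (xs @ ys) x = foldl (\<lambda>vs g. vs @ [gate_val vs x g]) (circ_vals xs x) ys"
  by (simp add: circ_vals_def)

lemma hw_gate_val:
  assumes g: "gate_wf (length pre + length x) k g"
    and lW: "length W = 5*k" and IH: "\<forall>i<k. W!(5*i+4) = V!i" and lV: "k \<le> length V"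
  shows "gate_val (W @ [x!0, \<not> x!0, x!0 \<or> \<not> x!0]) x (hw_gate pre (5*k) g) = gate_val (take k V) (pre @ x) g"
proof (cases g)
  case (Inp j)
  show ?thesis
  proof (cases "j \<le> length pre")
    case True
    then show ?thesis using Inp g lW by (auto simp: nth_append gate_wf_def)
  next
    case False
    then have nl: "\<not> (j - 1 < length pre)" by simp
    have "(pre @ x) ! (j - 1) = x ! (j - 1 - length pre)" using nl by (simp only: nth_append if_False)
    then have "(pre @ x) ! (j - 1) = x ! (j - length pre - 1)" by simp
    then show ?thesis using False Inp by simp
  qed
next
  case (AndG a b)
  have "5*a+4 < 5*k" "5*b+4 < 5*k" using g AndG by (auto simp: gate_wf_def)
  then show ?thesis using AndG IH lV lW by (simp add: nth_append)
next
  case (OrG a b)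
  have "5*a+4 < 5*k" "5*b+4 < 5*k" using g OrG by (auto simp: gate_wf_def)
  then show ?thesis using OrG IH lV lW by (simp add: nth_append)
next
  case (NotG a)
  have "5*a+4 < 5*k" using g NotG by (auto simp: gate_wf_def)
  then show ?thesis using NotG IH lV lW by (simp add: nth_append)
qed

lemma hw_blocks_vals:
  assumes wf: "wf_circuit (length pre + length x) C"
  shows "k \<le> length C \<Longrightarrow> \<forall>i<k. circ_vals (hw_blocks pre C k) x ! (5*i+4) = circ_vals C (pre @ x) ! i"
proof (induction k)
  case 0 then show ?case by simp
next
  case (Suc k)
  let ?V = "circ_vals C (pre @ x)"
  let ?W = "circ_vals (hw_blocks pre C k) x"
  have k: "k < length C" using Suc by simp
  have IH: "\<forall>i<k. ?W!(5*i+4) = ?V!i" using Suc by simp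
  have lW: "length ?W = 5*k" by simp
  have g: "gate_wf (length pre + length x) k (C!k)"
    using wf k unfolding wf_circuit_iff by blast
  have kv: "gate_val (?W @ [x!0, \<not> x!0, x!0 \<or> \<not> x!0]) x (hw_gate pre (5*k) (C!k)) = ?V ! k"
    using hw_gate_val[OF g lW IH] k circ_vals_nth[OF k] by simp
  have e: "circ_vals (hw_blocks pre C (Suc k)) x = ?W @ [x!0, \<not> x!0, x!0 \<or> \<not> x!0,
       gate_val (?W @ [x!0, \<not> x!0, x!0 \<or> \<not> x!0]) x (hw_gate pre (5*k) (C!k)),
       gate_val (?W @ [x!0, \<not> x!0, x!0 \<or> \<not> x!0]) x (hw_gate pre (5*k) (C!k))]"
    by (simp add: hw_blocks_Suc circ_vals_app hw_block_def nth_append)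
  show ?case
  proof (intro allI impI)
    fix i assume i: "i < Suc k"
    show "circ_vals (hw_blocks pre C (Suc k)) x ! (5*i+4) = ?V ! i"
    proof (cases "i < k")
      case True
      then have "5*i+4 < 5*k" by simp
      then show ?thesis using IH True e by (simp add: nth_append)
    next
      case False
      then have "i = k" using i by simp
      then show ?thesis using e kv by (simp add: nth_append)
    qed
  qed
qed

lemma circ_out_hardwire:
  assumes wf: "wf_circuit (length pre + length x) C"
  shows "circ_out (hardwire pre C) x = circ_out C (pre @ x)"
proof -
  have ne: "C \<noteq> []" using wf unfolding wf_circuit_def by simp
  then obtain m where m: "length C = Suc m" by (cases C) auto
  have "circ_vals (hardwire pre C) x ! (5*m+4) = circ_vals C (pre @ x) ! m"
    using hw_blocks_vals[OF wf, of "length C"] m unfolding hardwire_def by simp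
  moreover have "circ_vals (hardwire pre C) x \<noteq> []" "circ_vals C (pre @ x) \<noteq> []"
    using m by (auto simp: hardwire_def simp flip: length_greater_0_conv)
  moreover have "5*m+4 = 4 + 5*m" by simp
  ultimately show ?thesis unfolding circ_out_def using m by (simp add: last_conv_nth hardwire_def)
qed

lemma hardwire_nth:
  "q < length C \<Longrightarrow> r < 5 \<Longrightarrow> hardwire pre C ! (5*q + r) = hw_block pre q (C!q) ! r"
  unfolding hardwire_def by (rule hw_blocks_nth)

lemma length_hardwire[simp]: "length (hardwire pre C) = 5 * length C"
  by (simp add: hardwire_def)

lemma gate_wf_hardwire:
  assumes wf: "wf_circuit (length pre + n) C" and n: "1 \<le> n" and i: "i < length (hardwire pre C)"
  shows "gate_wf n i (hardwire pre C ! i)"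
proof -
  define q r where "q = i div 5" and "r = i mod 5"
  have qr: "i = 5*q + r" "r < 5" "q < length C" using i unfolding q_def r_def by auto
  have g: "gate_wf (length pre + n) q (C!q)" using wf qr(3) unfolding wf_circuit_iff by blast
  have "r = 0 \<or> r = 1 \<or> r = 2 \<or> r = 3 \<or> r = 4" using qr(2) by auto
  then show ?thesis
    using g n hardwire_nth[OF qr(3) qr(2), of pre] unfolding qr(1)
    by (cases "C!q") (auto simp: hw_block_def gate_wf_def)
qed

lemma hardwire_has_child:
  assumes wf: "wf_circuit (length pre + n) C" and i: "Suc i < length (hardwire pre C)"
  shows "\<exists>j < length (hardwire pre C). i \<in> gate_parents (hardwire pre C ! j)"
proof -
  define q r where "q = i div 5" and "r = i mod 5"
  have qr: "i = 5*q + r" "r < 5" "q < length C" using i unfolding q_def r_def by auto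
  note E = hardwire_nth[OF qr(3), of _ pre]
  consider "r = 0" | "r = 1" | "r = 2 \<or> r = 3" | "r = 4" using qr(2) by linarith
  then show ?thesis
  proof cases
    case 1 then show ?thesis using qr E[of 1] by (intro exI[of _ "5*q+1"]) (auto simp: hw_block_def)
  next
    case 2 then show ?thesis using qr E[of 2] by (intro exI[of _ "5*q+2"]) (auto simp: hw_block_def)
  next
    case 3 then show ?thesis using qr E[of 4] by (intro exI[of _ "5*q+4"]) (auto simp: hw_block_def)
  next
    case 4
    then have "Suc q < length C" using i qr by simp
    then obtain j where j: "j < length C" "q \<in> gate_parents (C!j)"
      using wf unfolding wf_circuit_iff by blast
    have "i \<in> gate_parents (hardwire pre C ! (5*j+3))"
      using hardwire_nth[OF j(1), of 3 pre] j(2) 4 qr by (cases "C!j") (auto simp: hw_block_def)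
    then show ?thesis using j by (intro exI[of _ "5*j+3"]) auto
  qed
qed

lemma wf_circuit_hardwire:
  assumes wf: "wf_circuit (length pre + n) C" and n: "1 \<le> n"
  shows "wf_circuit n (hardwire pre C)"
  using wf gate_wf_hardwire[OF wf n] hardwire_has_child[OF wf]
  unfolding wf_circuit_iff by (simp flip: length_greater_0_conv)

lemma circ_cplx_hardwire_le:
  assumes C: "circ_computes (length pre + n) C g" and n: "1 \<le> n"
    and f: "\<forall>x. length x = n \<longrightarrow> f x = g (pre @ x)"
  shows "circ_cplx n f \<le> enc_len (5 * length C) n"
proof -
  have wf: "wf_circuit (length pre + n) C" using C unfolding circ_computes_def ..
  have "circ_computes n (hardwire pre C) f"
    unfolding circ_computes_def
  proof (intro conjI allI impI)
    show "wf_circuit n (hardwire pre C)" by (rule wf_circuit_hardwire[OF wf n])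
  next
    fix x :: "bool list" assume x: "length x = n"
    have "circ_out (hardwire pre C) x = circ_out C (pre @ x)"
      by (rule circ_out_hardwire) (use wf x in simp)
    then show "circ_out (hardwire pre C) x = f x" using C f x unfolding circ_computes_def by simp
  qed
  then show ?thesis unfolding circ_cplx_def by (intro Least_le) auto
qed

section \<open>Size estimates\<close>

lemma clog_le_log: "1 \<le> k \<Longrightarrow> real (clog k) \<le> log 2 (real k) + 1"
proof -
  assume k: "1 \<le> k"
  have "0 \<le> log 2 (real k)" using k by simp
  then have "0 \<le> \<lceil>log 2 (real k)\<rceil>" by simp
  then have "real (clog k) = real_of_int \<lceil>log 2 (real k)\<rceil>" unfolding clog_def by simp
  also have "\<dots> \<le> log 2 (real k) + 1" by linarith
  finally show ?thesis .
qed

lemma ln_2_ge_half: "1/2 \<le> ln (2::real)"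
proof -
  have "ln (1/2::real) \<le> 1/2 - 1" by (rule ln_le_minus_one) simp
  then show ?thesis by (simp add: ln_div)
qed

lemma log_le_powr: assumes z: "1 \<le> z" and e: "0 < \<epsilon>" shows "log 2 z \<le> (2/\<epsilon>) * z powr \<epsilon>"
proof -
  have zp: "0 < z" using z by simp
  have "\<epsilon> * ln z = ln (z powr \<epsilon>)" using zp by (simp add: ln_powr)
  also have "\<dots> \<le> z powr \<epsilon> - 1" by (rule ln_le_minus_one) (use zp in simp)
  finally have a: "\<epsilon> * ln z \<le> z powr \<epsilon>" by simp
  have lz: "0 \<le> ln z" using z by simp
  have "log 2 z = ln z / ln 2" by (simp add: log_def)
  also have "\<dots> \<le> ln z / (1/2)" using ln_2_ge_half lz by (intro divide_left_mono) auto
  also have "\<dots> = 2 * ln z" by simp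
  also have "\<dots> \<le> 2 * (z powr \<epsilon> / \<epsilon>)" using a e by (simp add: field_simps)
  finally show ?thesis by simp
qed

lemma clog_le_powr: "1 \<le> k \<Longrightarrow> 0 < \<epsilon> \<Longrightarrow> real (clog k) \<le> 1 + (2/\<epsilon>) * real k powr \<epsilon>"
  using clog_le_log[of k] log_le_powr[of "real k" \<epsilon>] by simp

lemma powr_bounds_of_size_le:
  assumes m: "1 \<le> m" and S: "1 \<le> S" "real S \<le> A * real m powr (1+\<tau>)"
    and t: "0 < \<tau>" "\<tau> \<le> 1" and A: "0 < A"
  shows "real S powr (1+\<tau>) \<le> A powr (1+\<tau>) * real m powr (1+3*\<tau>)"
    and "real S * real m powr \<tau> \<le> A * real m powr (1+3*\<tau>)"
proof -
  have m1: "1 \<le> real m" using m by simp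
  have "real S powr (1+\<tau>) \<le> (A * real m powr (1+\<tau>)) powr (1+\<tau>)"
    using S t by (intro powr_mono2) auto
  also have "\<dots> = A powr (1+\<tau>) * real m powr ((1+\<tau>)*(1+\<tau>))"
    using A m1 by (simp add: powr_mult powr_powr)
  also have "\<dots> \<le> A powr (1+\<tau>) * real m powr (1+3*\<tau>)"
    using m1 t by (intro mult_left_mono powr_mono) (auto simp: algebra_simps mult_le_cancel_left1)
  finally show "real S powr (1+\<tau>) \<le> A powr (1+\<tau>) * real m powr (1+3*\<tau>)" .
  have "real S * real m powr \<tau> \<le> (A * real m powr (1+\<tau>)) * real m powr \<tau>"
    using S(2) by (simp add: mult_right_mono)
  also have "\<dots> = A * real m powr (1+2*\<tau>)" using m1 by (simp add: powr_add[symmetric] algebra_simps)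
  also have "\<dots> \<le> A * real m powr (1+3*\<tau>)" using m1 t A by (intro mult_left_mono powr_mono) auto
  finally show "real S * real m powr \<tau> \<le> A * real m powr (1+3*\<tau>)" .
qed

lemma enc_len_le_powr:
  assumes n: "1 \<le> n" "n \<le> m" and S: "1 \<le> S" "real S \<le> A * real m powr (1+\<tau>)"
    and t: "0 < \<tau>" "\<tau> \<le> 1" and A: "0 < A"
  shows "real (enc_len S n) \<le> (10 + 10/\<tau> + 6*A + (4/\<tau>) * A powr (1+\<tau>) + (2/\<tau>)*A) * real m powr (1+3*\<tau>)"
proof -
  define P where "P = real m powr (1+3*\<tau>)"
  have m1: "1 \<le> real m" using n by simp
  have F1: "1 \<le> P" unfolding P_def by (rule ge_one_powr_ge_zero) (use m1 t in auto)
  have F2: "real m powr \<tau> \<le> P" unfolding P_def using m1 t by (intro powr_mono) auto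
  have F2': "real n powr \<tau> \<le> real m powr \<tau>" using n t by (intro powr_mono2) auto
  have mp: "real m powr (1+\<tau>) \<le> P" unfolding P_def using m1 t by (intro powr_mono) auto
  have F3: "real S \<le> A*P" using S(2) mp A by (meson mult_left_mono less_imp_le order_trans)
  have Sp: "0 < real S" using S by simp
  have m: "1 \<le> m" using n by simp
  note F4 = powr_bounds_of_size_le(1)[OF m S t A, folded P_def]
    and F5 = powr_bounds_of_size_le(2)[OF m S t A, folded P_def]
  have cn: "real (clog n) \<le> 1 + (2/\<tau>) * real m powr \<tau>"
    using clog_le_powr[OF n(1) t(1)] F2' t by (smt (verit) divide_pos_pos mult_left_mono)
  have cs: "real (clog S) \<le> 1 + (2/\<tau>) * real S powr \<tau>" using clog_le_powr[OF S(1) t(1)] .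
  have "enc_len S n \<le> 2 * clog n + 2 + S * (3 + 2 * clog S + clog n)"
    unfolding enc_len_def by simp
  then have "real (enc_len S n) \<le> 2 * real (clog n) + 2 + real S * (3 + 2 * real (clog S) + real (clog n))"
    by (metis (mono_tags, lifting) of_nat_le_iff of_nat_add of_nat_mult of_nat_numeral)
  also have "\<dots> \<le> 2 * (1 + (2/\<tau>) * real m powr \<tau>) + 2 + real S * (3 + 2 * (1 + (2/\<tau>) * real S powr \<tau>) + (1 + (2/\<tau>) * real m powr \<tau>))"
    using cn cs Sp by (intro add_mono mult_left_mono) auto
  also have "\<dots> = 4 + (4/\<tau>) * real m powr \<tau> + 6 * real S + (4/\<tau>) * (real S * real S powr \<tau>) + (2/\<tau>) * (real S * real m powr \<tau>)"
    by (simp add: algebra_simps)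
  also have "real S * real S powr \<tau> = real S powr (1+\<tau>)" using Sp by (simp add: powr_add)
  also have "4 + (4/\<tau>) * real m powr \<tau> + 6 * real S + (4/\<tau>) * real S powr (1+\<tau>) + (2/\<tau>) * (real S * real m powr \<tau>)
     \<le> 4*P + (4/\<tau>) * P + 6 * (A*P) + (4/\<tau>) * (A powr (1+\<tau>) * P) + (2/\<tau>) * (A * P)"
    using F1 F2 F3 F4 F5 n t by (intro add_mono mult_left_mono) auto
  also have "\<dots> \<le> (10 + 10/\<tau> + 6*A + (4/\<tau>) * A powr (1+\<tau>) + (2/\<tau>)*A) * P"
  proof -
    have "P*4/\<tau> \<le> P*10/\<tau>" using F1 t by (intro divide_right_mono) auto
    then show ?thesis using F1 by (simp add: algebra_simps)
  qed
  finally show ?thesis unfolding P_def .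
qed

lemma ratio_le_powr:
  assumes n: "1 \<le> n" and s: "1 \<le> s" "s \<le> n^d" and d: "1 \<le> d" and m: "m = 2*s+1+n"
    and t: "0 < \<tau>" "\<tau> \<le> 1" "3*\<tau>*real d \<le> \<gamma>" and Q: "0 \<le> Q"
    and E: "E \<le> Q * real m powr (1+3*\<tau>)"
  shows "E / real s \<le> 256 * Q * real n powr (1+\<gamma>)"
proof -
  have nd: "n \<le> n^d" using n d by (metis One_nat_def le_trans power_increasing power_one_right)
  have "1 \<le> n^d" using n by simp
  then have m4: "m \<le> 4 * n^d" using m s nd by linarith
  have ms: "m \<le> 4 * n * s" proof -
    have "n \<le> n*s" using s by simp
    moreover have "s*(3+n) = 3*s + n*s" by (simp add: algebra_simps)
    ultimately have "m \<le> s*(3+n)" using m s n by linarith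
    also have "\<dots> \<le> s * (4*n)" using n by simp
    finally show ?thesis by (simp add: algebra_simps)
  qed
  have m1: "1 \<le> real m" using m by simp
  have sp: "0 < real s" using s by simp
  have np: "0 < real n" using n by simp
  have "real m powr (3*\<tau>) \<le> (4 * real n ^ d) powr (3*\<tau>)"
    using m4 t m1 by (intro powr_mono2) (auto simp flip: of_nat_power)
  also have "\<dots> = 4 powr (3*\<tau>) * real n powr (real d * (3*\<tau>))"
    using np by (simp add: powr_mult powr_realpow[symmetric] powr_powr)
  finally have A0: "real m powr (3*\<tau>) \<le> 4 powr (3*\<tau>) * real n powr (real d * (3*\<tau>))" .
  have a1: "4 powr (3*\<tau>) \<le> (4::real) powr 3" using t by (intro powr_mono) auto
  have a1': "(4::real) powr 3 = 64" by (simp add: powr_numeral)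
  have a2: "real n powr (real d * (3*\<tau>)) \<le> real n powr \<gamma>" using n t by (intro powr_mono) (auto simp: algebra_simps)
  have "4 powr (3*\<tau>) * real n powr (real d * (3*\<tau>)) \<le> 64 * real n powr \<gamma>"
    using a1 a1' a2 by (intro mult_mono) auto
  then have A: "real m powr (3*\<tau>) \<le> 64 * real n powr \<gamma>" using A0 by linarith
  have "E / real s \<le> Q * real m powr (1+3*\<tau>) / real s" using E sp by (simp add: divide_right_mono)
  also have "real m powr (1+3*\<tau>) = real m * real m powr (3*\<tau>)" using m1 by (simp add: powr_add)
  also have "Q * (real m * real m powr (3*\<tau>)) / real s = Q * (real m / real s) * real m powr (3*\<tau>)" by simp
  also have "real m / real s \<le> 4 * real n" using ms sp by (simp add: field_simps) (metis of_nat_le_iff of_nat_mult of_nat_numeral)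
  also have "Q * (4 * real n) * real m powr (3*\<tau>) \<le> Q * (4 * real n) * (64 * real n powr \<gamma>)"
    using A Q np by (intro mult_left_mono) auto
  also have "\<dots> = 256 * Q * (real n * real n powr \<gamma>)" by simp
  also have "real n * real n powr \<gamma> = real n powr (1+\<gamma>)" using np by (simp add: powr_add)
  finally show ?thesis using Q np by (simp add: mult_left_mono mult_right_mono)
qed

section \<open>The ratio supremum\<close>

lemma finite_Hn: "finite (Hn n)"
proof -
  have fl: "finite {x::bool list. length x = n}"
    using finite_lists_length_eq[of "UNIV::bool set" n] by simp
  have "Hn n \<subseteq> (\<lambda>S x. x \<in> S) ` Pow {x::bool list. length x = n}"
  proof
    fix f assume f: "f \<in> Hn n"
    have "f = (\<lambda>x. x \<in> {x. length x = n \<and> f x})" using f unfolding Hn_def by auto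
    then show "f \<in> (\<lambda>S x. x \<in> S) ` Pow {x::bool list. length x = n}" by blast
  qed
  then show ?thesis using fl by (meson finite_Pow_iff finite_imageI finite_subset)
qed

lemma prog_size_finite_witness:
  assumes "prog_size \<phi> n f \<le> enat B"
  obtains h where "prog_size \<phi> n f = enat (length h)" "\<forall>x. length x = n \<longrightarrow> \<phi> h x = Some (f x)"
proof -
  let ?P = "\<lambda>h. \<forall>x. length x = n \<longrightarrow> \<phi> h x = Some (f x)"
  have ex: "\<exists>h. ?P h"
  proof (rule ccontr)
    assume "\<not> (\<exists>h. ?P h)"
    then have "prog_size \<phi> n f = \<infinity>" unfolding prog_size_def by simp
    then show False using assms by simp
  qed
  then have least: "prog_size \<phi> n f = enat (LEAST k. \<exists>h. length h = k \<and> ?P h)"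
    unfolding prog_size_def by (simp only: if_True)
  from ex have "\<exists>k h. length h = k \<and> ?P h" by blast
  then have "\<exists>h. length h = (LEAST k. \<exists>h. length h = k \<and> ?P h) \<and> ?P h"
    by (rule LeastI_ex)
  then obtain h where h: "length h = (LEAST k. \<exists>h. length h = k \<and> ?P h)" "?P h" by blast
  show ?thesis by (rule that[of h]) (simp only: least h(1), rule h(2))
qed

lemma ratio_sup_le:
  assumes B: "0 \<le> B"
    and el: "\<And>f. f \<in> Hn n \<Longrightarrow> prog_size \<phi> n f \<le> enat (n ^ d) \<Longrightarrow>
        real (circ_cplx n f) / real (the_enat (prog_size \<phi> n f)) \<le> B"
  shows "0 \<le> ratio_sup \<phi> d n" "ratio_sup \<phi> d n \<le> B"
proof -
  let ?F = "{f. f \<in> Hn n \<and> prog_size \<phi> n f \<le> enat (n ^ d)}"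
  have "finite ?F" using finite_Hn[of n] by (simp add: Collect_conj_eq)
  then have fin: "finite (insert 0 ((\<lambda>f. real (circ_cplx n f) / real (the_enat (prog_size \<phi> n f))) ` ?F))"
    by simp
  have set_eq: "{real (circ_cplx n f) / real (the_enat (prog_size \<phi> n f)) | f.
        f \<in> Hn n \<and> prog_size \<phi> n f \<le> enat (n ^ d)} =
      (\<lambda>f. real (circ_cplx n f) / real (the_enat (prog_size \<phi> n f))) ` ?F"
    by blast
  show "0 \<le> ratio_sup \<phi> d n" unfolding ratio_sup_def set_eq using fin by (simp add: Max_ge_iff)
  show "ratio_sup \<phi> d n \<le> B" unfolding ratio_sup_def set_eq using fin B el by (auto simp: Max_le_iff)
qed

lemma circ_cplx_le_via_pair_lang:
  assumes dec: "\<forall>p x. p \<noteq> [] \<longrightarrow> (pair_enc p x \<in> L \<longleftrightarrow> \<phi> p x = Some True)"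
    and C: "circ_computes (2 * length h + 1 + n) C (\<lambda>y. y \<in> L)"
    and h: "h \<noteq> []" "\<forall>x. length x = n \<longrightarrow> \<phi> h x = Some (f x)" and n: "1 \<le> n"
  shows "circ_cplx n f \<le> enc_len (5 * length C) n"
proof (rule circ_cplx_hardwire_le[of "enc_bits h @ [False]"])
  show "circ_computes (length (enc_bits h @ [False]) + n) C (\<lambda>y. y \<in> L)" using C by simp
  show "\<forall>x. length x = n \<longrightarrow> f x = ((enc_bits h @ [False]) @ x \<in> L)"
    using dec h unfolding pair_enc_def by auto
qed (rule n)

lemma ratio_sup_bigo_of_small_circuits:
  fixes \<phi> :: interp and L :: language and C :: "nat \<Rightarrow> gate list"
  assumes progs: "\<forall>p x. \<phi> p x \<noteq> None \<longrightarrow> p \<noteq> []"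
    and dec: "\<forall>p x. p \<noteq> [] \<longrightarrow> (pair_enc p x \<in> L \<longleftrightarrow> \<phi> p x = Some True)"
    and circ: "\<forall>m \<ge> 1. circ_computes m (C m) (\<lambda>y. y \<in> L)"
    and small: "(\<lambda>m. real (length (C m))) \<in> O(\<lambda>m. real m powr (1 + \<tau>))"
    and t: "0 < \<tau>" "\<tau> \<le> 1" "3 * \<tau> * real d \<le> \<gamma>" and d: "1 \<le> d"
  shows "(\<lambda>n. ratio_sup \<phi> d n) \<in> O(\<lambda>n. real n powr (1 + \<gamma>))"
proof -
  obtain K where K: "K > 0"
    and "eventually (\<lambda>m. norm (real (length (C m))) \<le> K * norm (real m powr (1 + \<tau>))) at_top"
    using landau_o.bigE[OF small] by blast
  then obtain N where N: "\<And>m. m \<ge> N \<Longrightarrow> real (length (C m)) \<le> K * real m powr (1 + \<tau>)"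
    unfolding eventually_at_top_linorder by auto
  define A where "A = 5 * K"
  define Q where "Q = 10 + 10/\<tau> + 6*A + (4/\<tau>) * A powr (1+\<tau>) + (2/\<tau>)*A"
  have A: "0 < A" using K unfolding A_def by simp
  then have Q: "0 < Q" unfolding Q_def using t by (intro add_pos_nonneg) auto
  have ratio: "real (circ_cplx n f) / real (the_enat (prog_size \<phi> n f)) \<le> 256 * Q * real n powr (1+\<gamma>)"
    if n: "n \<ge> max N 1" and f: "prog_size \<phi> n f \<le> enat (n ^ d)" for n f
  proof -
    obtain h where h: "prog_size \<phi> n f = enat (length h)" "\<forall>x. length x = n \<longrightarrow> \<phi> h x = Some (f x)"
      using prog_size_finite_witness[OF f] by blast
    define s m where "s = length h" and "m = 2 * s + 1 + n"
    have hne: "h \<noteq> []" using progs h(2)[rule_format, of "replicate n False"] by auto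
    have Cm: "circ_computes m (C m) (\<lambda>y. y \<in> L)" using circ unfolding m_def by simp
    then have "C m \<noteq> []" unfolding circ_computes_def wf_circuit_def by simp
    have "circ_cplx n f \<le> enc_len (5 * length (C m)) n"
      using circ_cplx_le_via_pair_lang[OF dec _ hne h(2)] Cm n unfolding m_def s_def by simp
    moreover have "real (enc_len (5 * length (C m)) n) \<le> Q * real m powr (1+3*\<tau>)"
      unfolding Q_def using n N[of m] \<open>C m \<noteq> []\<close> t A
      by (intro enc_len_le_powr) (auto simp: m_def A_def Suc_le_eq)
    ultimately have "real (circ_cplx n f) \<le> Q * real m powr (1+3*\<tau>)" by linarith
    then have "real (circ_cplx n f) / real s \<le> 256 * Q * real n powr (1+\<gamma>)"
      using n f h hne t d Q by (intro ratio_le_powr[OF _ _ _ _ m_def]) (auto simp: s_def Suc_le_eq)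
    then show ?thesis using h(1) unfolding s_def by simp
  qed
  have sup: "0 \<le> ratio_sup \<phi> d n \<and> ratio_sup \<phi> d n \<le> 256 * Q * real n powr (1+\<gamma>)"
    if "n \<ge> max N 1" for n
    using ratio_sup_le[of "256 * Q * real n powr (1+\<gamma>)" n \<phi> d] ratio[OF that] Q by simp
  show ?thesis
  proof (rule bigoI)
    show "eventually (\<lambda>n. norm (ratio_sup \<phi> d n) \<le> (256 * Q) * norm (real n powr (1 + \<gamma>))) at_top"
      unfolding eventually_at_top_linorder using sup by (intro exI[of _ "max N 1"]) auto
  qed
qed

lemma exponent_for_small_circuits:
  assumes "0 < \<gamma>"
  shows "\<exists>\<tau>::real. 0 < \<tau> \<and> \<tau> \<le> 1 \<and> 3 * \<tau> * real d \<le> \<gamma>"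
proof (intro exI conjI)
  let ?\<tau> = "min 1 (\<gamma> / (3 * (real d + 1)))"
  show "0 < ?\<tau>" "?\<tau> \<le> 1" using assms by simp_all
  have "3 * ?\<tau> * real d \<le> 3 * (\<gamma> / (3 * (real d + 1))) * (real d + 1)"
    using assms by (intro mult_mono) auto
  also have "\<dots> = \<gamma>" by (simp add: field_simps add_pos_nonneg)
  finally show "3 * ?\<tau> * real d \<le> \<gamma>" .
qed

theorem mainTheorem13:
  fixes U :: "nat \<Rightarrow> interp"
  assumes "\<forall>c > 0. is_Uc c (U c)"
    and "\<exists>c d (\<gamma>::real). c > 0 \<and> d > 0 \<and> \<gamma> > 0 \<and>
           (\<lambda>n. ratio_sup (U c) d n) \<notin> O(\<lambda>n. real n powr (1 + \<gamma>))"
  shows "\<exists>(L::language) (\<tau>::real). in_P L \<and> \<tau> > 0 \<and>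
           \<not> (\<exists>C :: nat \<Rightarrow> gate list.
                 (\<forall>n \<ge> 1. circ_computes n (C n) (\<lambda>x. x \<in> L)) \<and>
                 (\<lambda>n. real (length (C n))) \<in> O(\<lambda>n. real n powr (1 + \<tau>)))"
proof -
  obtain c d and \<gamma> :: real where cd: "c > 0" "d > 0" "\<gamma> > 0"
    and notO: "(\<lambda>n. ratio_sup (U c) d n) \<notin> O(\<lambda>n. real n powr (1 + \<gamma>))"
    using assms(2) by blast
  obtain M \<beta> where prog_length: "\<forall>p x. U c p x \<noteq> None \<longrightarrow> length p \<ge> 2"
    and M: "wf_tm M" "tm_ninp M = 2" "tm_nwork M = 3"
    and time: "\<forall>p x. halts_within M [p, x] (\<beta> * length x ^ c + \<beta>)"
    and acc: "\<forall>p x. accepts M [p, x] \<longleftrightarrow> U c p x = Some True"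
    using assms(1) cd(1) unfolding is_Uc_def by (elim allE[of _ c] impE) blast+
  define L where "L = {y. accepts (pair_tm M) [y]}"
  obtain \<tau> :: real where t: "0 < \<tau>" "\<tau> \<le> 1" "3 * \<tau> * real d \<le> \<gamma>"
    using exponent_for_small_circuits[OF cd(3), of d] by blast
  have prog_nonempty: "\<forall>p x. U c p x \<noteq> None \<longrightarrow> p \<noteq> []" using prog_length by fastforce
  have dec: "\<forall>p x. p \<noteq> [] \<longrightarrow> (pair_enc p x \<in> L \<longleftrightarrow> U c p x = Some True)"
  proof (intro allI impI)
    fix p x :: "bool list" assume "p \<noteq> []"
    then show "pair_enc p x \<in> L \<longleftrightarrow> U c p x = Some True"
      using pair_tm_on_pair_enc[OF M(3) time[rule_format, of p x]] acc unfolding L_def by simp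
  qed
  have "\<not> (\<exists>C :: nat \<Rightarrow> gate list. (\<forall>n \<ge> 1. circ_computes n (C n) (\<lambda>x. x \<in> L)) \<and>
                 (\<lambda>n. real (length (C n))) \<in> O(\<lambda>n. real n powr (1 + \<tau>)))"
    using ratio_sup_bigo_of_small_circuits[OF prog_nonempty dec _ _ t] cd(2) notO by auto
  moreover have "in_P L" unfolding L_def by (rule in_P_pair_tm[OF M time])
  ultimately show ?thesis using t(1) by blast
qed

end
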